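(* Let $\mathbf b=b_0b_1b_2\cdots\in\{1,-1\}^{\mathbb N}$. Let $t\ge1$, $0\le u\le t$ and $0\le p\le 2^{t-u}-1$ be integers. Then (1) for each $k\ge0$ such that $k\le u-2$ or $k\ge t-1$, we have $\mathcal E_{k,b_k}(\ell_{t-1}+2^u p,\,2^u,\,2^{t-u})=\mathbf 0$; (2) moreover, $\mathcal E_{k,b}(\ell_{t-1}+2^u p,\,2^u,\,2^{t-u})=\mathbf 0$ for both $b\in\{-1,1\}$ and each $k\ge0$ such that $k\le u-2$ or $k\ge t+3$.
   Context: For integers $a$ and $N\ge1$, $(a \bmod N)$ denotes the unique integer in $\{0,\dots,N-1\}$ congruent to $a$ modulo $N$; we write $a\succ c \pmod N$ iff $(a\bmod N)>(c\bmod N)$. For $b\in\{-1,1\}$, $k\ge0$ and integers $0\le\ell\le n$, let $\varepsilon_{k,b}(\ell,n)=1$ if $n-\ell \succ (2+b)\cdot 2^k-(\ell+1) \pmod{2^{k+2}}$ and $\varepsilon_{k,b}(\ell,n)=0$ otherwise. For $s\ge0$, $d,m\ge1$, $\mathcal E_{k,b}(s,d,m)=\big(\varepsilon_{k,b}(s+jd,s+(j+1)d)\big)_{j=0}^{m-1}$, and $\mathbf 0$ is the zero vector. For $x_0,x_1,x_2,x_3\in\{1,-1\}$, $\ell(x_0,x_1,x_2,x_3)$ is given by the table (listing $(x_0,x_1,x_2,x_3)\mapsto \ell$): $(1,1,1,1)\mapsto7$, $(-1,1,1,1)\mapsto1$, $(1,-1,1,1)\mapsto3$, $(-1,-1,1,1)\mapsto5$,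 $(1,1,-1,1)\mapsto7$, $(-1,1,-1,1)\mapsto9$, $(1,-1,-1,1)\mapsto11$, $(-1,-1,-1,1)\mapsto5$, $(1,1,1,-1)\mapsto23$, $(-1,1,1,-1)\mapsto1$, $(1,-1,1,-1)\mapsto3$, $(-1,-1,1,-1)\mapsto21$, $(1,1,-1,-1)\mapsto23$, $(-1,1,-1,-1)\mapsto9$, $(1,-1,-1,-1)\mapsto11$, $(-1,-1,-1,-1)\mapsto21$. For $t\ge0$, $\ell_t:=2^t\,\ell(b_t,b_{t+1},b_{t+2},b_{t+3})$. *)

theory Defs
  imports Main
begin

text \<open>a \<succ> c (mod N) iff (a mod N) > (c mod N); for N \<ge> 1 Isabelle's int mod is
  the least nonnegative residue.\<close>
definition succ_mod :: "int \<Rightarrow> int \<Rightarrow> int \<Rightarrow> bool" where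
  "succ_mod a c N \<longleftrightarrow> a mod N > c mod N"

definition eps :: "nat \<Rightarrow> int \<Rightarrow> int \<Rightarrow> int \<Rightarrow> int" where
  "eps k b l n = (if succ_mod (n - l) ((2 + b) * 2 ^ k - (l + 1)) (2 ^ (k + 2)) then 1 else 0)"

definition calE :: "nat \<Rightarrow> int \<Rightarrow> int \<Rightarrow> int \<Rightarrow> nat \<Rightarrow> int list" where
  "calE k b s d m = map (\<lambda>j. eps k b (s + int j * d) (s + (int j + 1) * d)) [0..<m]"

definition ell :: "int \<Rightarrow> int \<Rightarrow> int \<Rightarrow> int \<Rightarrow> int" where
  "ell x0 x1 x2 x3 =
    (if x3 = 1 then
       (if x2 = 1 then
          (if x1 = 1 then (if x0 = 1 then 7 else 1) else (if x0 = 1 then 3 else 5))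
        else
          (if x1 = 1 then (if x0 = 1 then 7 else 9) else (if x0 = 1 then 11 else 5)))
     else
       (if x2 = 1 then
          (if x1 = 1 then (if x0 = 1 then 23 else 1) else (if x0 = 1 then 3 else 21))
        else
          (if x1 = 1 then (if x0 = 1 then 23 else 9) else (if x0 = 1 then 11 else 21))))"

definition ellt :: "(nat \<Rightarrow> int) \<Rightarrow> nat \<Rightarrow> int" where
  "ellt b t = 2 ^ t * ell (b t) (b (t + 1)) (b (t + 2)) (b (t + 3))"

end

theory Submission
  imports Defs
begin

text \<open>Every window \<open>[l, l + 2^u)\<close> of the statement lies in \<open>[\<ell>\<^sub>t\<^sub>-\<^sub>1, \<ell>\<^sub>t\<^sub>-\<^sub>1 + 2^(t+1))\<close>,
  and \<open>\<ell>\<^sub>t\<^sub>-\<^sub>1 = 2^(t-1) L\<close> with \<open>L = \<ell>(b\<^sub>t\<^sub>-\<^sub>1, \<dots>, b\<^sub>t\<^sub>+\<^sub>2)\<close>. Writing \<open>k = t - 1 + i\<close>, the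
  residue \<open>(2 + c) 2^k - (l + 1)\<close> modulo \<open>2^(k+2)\<close> is then \<open>2^(t-1)\<close> times the residue of
  \<open>(2 + c) 2^i - L\<close> modulo \<open>2^(i+2)\<close>, shifted down by less than \<open>2^(t+1)\<close>; so \<open>\<epsilon>\<^sub>k\<^sub>,\<^sub>c\<close>
  vanishes on every window as soon as that residue avoids \<open>1, 2, 3\<close>. For \<open>i < 4\<close> and
  \<open>c = b\<^sub>k\<close> this is what the table for \<open>\<ell>\<close> is built for; for \<open>i \<ge> 4\<close> it holds for both
  signs because \<open>L \<in> [1,11] \<union> [21,23]\<close>. For \<open>k \<le> u - 2\<close> the window length \<open>2^u\<close> is a
  multiple of \<open>2^(k+2)\<close>, so \<open>\<epsilon>\<close> vanishes trivially.\<close>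

definition residue_gap :: "int \<Rightarrow> int \<Rightarrow> bool" where
  "residue_gap Q K \<longleftrightarrow> K mod Q = 0 \<or> 4 \<le> K mod Q"

lemma eps_shift_eq_0_iff:
  "eps k c l (l + d) = 0 \<longleftrightarrow> d mod 2^(k+2) \<le> ((2 + c) * 2^k - (l + 1)) mod 2^(k+2)"
  by (auto simp: eps_def succ_mod_def)

lemma calE_eq_replicate_0_iff:
  "calE k c s d m = replicate m 0 \<longleftrightarrow> (\<forall>j<m. eps k c (s + int j * d) (s + int j * d + d) = 0)"
  by (simp add: calE_def list_eq_iff_nth_eq distrib_right add.assoc)

lemma eps_eq_0_if_power_dvd:
  assumes "2^(k+2) dvd d"
  shows "eps k c l (l + d) = 0"
  using assms by (simp add: eps_shift_eq_0_iff)

lemma le_mod_mult_diff: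
  fixes M K Q r d :: int
  assumes "4 \<le> Q" "residue_gap Q K" "1 \<le> r" "0 \<le> d" "r + d \<le> 4 * M"
  shows "d \<le> (M * K - r) mod (M * Q)"
proof -
  have "M > 0" using assms by linarith
  then have MQ: "4 * M \<le> M * Q" using assms(1) by simp
  have "(M * K - r) mod (M * Q) = (M * (K mod Q) - r) mod (M * Q)"
    by (metis mod_diff_left_eq mult_mod_right)
  moreover have "d \<le> (M * (K mod Q) - r) mod (M * Q)"
  proof (cases "K mod Q = 0")
    case True
    have "(- r) mod (M * Q) = (M * Q - r) mod (M * Q)"
      by (metis diff_conv_add_uminus mod_add_self1)
    also have "\<dots> = M * Q - r"
      using MQ assms by (intro mod_pos_pos_trivial) linarith+
    finally have "(- r) mod (M * Q) = M * Q - r" .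
    then have "(M * (K mod Q) - r) mod (M * Q) = M * Q - r" using True by simp
    with MQ assms show ?thesis by linarith
  next
    case False
    then have "4 * M \<le> M * (K mod Q)" "K mod Q < Q"
      using assms(1,2) \<open>M > 0\<close> by (simp_all add: residue_gap_def)
    moreover have "M * (K mod Q) < M * Q" using \<open>K mod Q < Q\<close> \<open>M > 0\<close> by simp
    ultimately have "(M * (K mod Q) - r) mod (M * Q) = M * (K mod Q) - r"
      using assms by (intro mod_pos_pos_trivial) linarith+
    then show ?thesis using \<open>4 * M \<le> M * (K mod Q)\<close> assms by linarith
  qed
  ultimately show ?thesis by simp
qed

lemma eps_eq_0_if_residue_gap:
  fixes c L l d :: int
  assumes "s \<le> k" "residue_gap (2^(k-s+2)) ((2 + c) * 2^(k-s) - L)"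
    and "2^s * L \<le> l" "0 \<le> d" "l + 1 + d \<le> 2^s * (L + 4)"
  shows "eps k c l (l + d) = 0"
proof -
  have k: "k = s + (k - s)" using assms(1) by simp
  have "d \<le> (2^s * ((2 + c) * 2^(k-s) - L) - (l + 1 - 2^s * L)) mod (2^s * 2^(k-s+2))"
    using assms by (intro le_mod_mult_diff) (simp_all add: algebra_simps)
  also have "\<dots> = ((2 + c) * 2^k - (l + 1)) mod 2^(k+2)"
    by (subst (2 3) k) (simp add: power_add algebra_simps)
  moreover have "d mod 2^(k+2) \<le> d"
    using assms(4) by (rule zmod_le_nonneg_dividend)
  ultimately show ?thesis
    unfolding eps_shift_eq_0_iff by linarith
qed

lemma ell_range:
  assumes "x0 \<in> {1,-1}" "x1 \<in> {1,-1}" "x2 \<in> {1,-1}" "x3 \<in> {1,-1}"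
  shows "ell x0 x1 x2 x3 \<in> {1..11} \<union> {21..23}"
  using assms by (auto simp: ell_def)

lemma residue_gap_ell_table:
  assumes "\<forall>i. x i \<in> {1,-1}" "i < 4"
  shows "residue_gap (2^(i+2)) ((2 + x i) * 2^i - ell (x 0) (x 1) (x 2) (x 3))"
proof -
  have "i = 0 \<or> i = 1 \<or> i = 2 \<or> i = 3" using assms(2) by auto
  moreover have "x 0 \<in> {1,-1}" "x 1 \<in> {1,-1}" "x 2 \<in> {1,-1}" "x 3 \<in> {1,-1}"
    using assms(1) by blast+
  ultimately show ?thesis by (auto simp: ell_def residue_gap_def)
qed

lemma residue_gap_ell_high:
  fixes c L :: int
  assumes "4 \<le> i" "c \<in> {1,-1}" "L \<in> {1..11} \<union> {21..23}"
  shows "residue_gap (2^(i+2)) ((2 + c) * 2^i - L)"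
proof -
  have P: "(2::int)^(i+2) = 4 * 2^i" by simp
  have "(2::int)^4 \<le> 2^i" using assms(1) by (intro power_increasing) auto
  then have I: "16 \<le> (2::int)^i" by simp
  show ?thesis
  proof (cases "c = 1 \<or> 5 \<le> i")
    case True
    have "(2::int)^5 \<le> 2^i" if "5 \<le> i" using that by (intro power_increasing) auto
    then have "c = 1 \<or> 32 \<le> (2::int)^i" using True by auto
    then have "((2 + c) * 2^i - L) mod 2^(i+2) = (2 + c) * 2^i - L"
      "4 \<le> (2 + c) * 2^i - L"
      using assms I True unfolding P by (auto intro!: mod_pos_pos_trivial)
    then show ?thesis by (simp add: residue_gap_def)
  next
    case False
    then have "i = 4" "c = -1" using assms by auto
    then have K: "(2 + c) * 2^i - L = 16 - L" "(2::int)^(i+2) = 64" by simp_all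
    from assms(3) consider "1 \<le> L" "L \<le> 11" | "21 \<le> L" "L \<le> 23" by auto
    then show ?thesis
    proof cases
      case 1
      then have "(16 - L) mod 64 = 16 - L" by (intro mod_pos_pos_trivial) auto
      then show ?thesis unfolding residue_gap_def K using 1 by simp
    next
      case 2
      have "(16 - L) mod 64 = (16 - L + 64) mod 64" by (rule mod_add_self2[symmetric])
      also have "\<dots> = 16 - L + 64" using 2 by (intro mod_pos_pos_trivial) auto
      finally show ?thesis unfolding residue_gap_def K using 2 by simp
    qed
  qed
qed

lemma calE_eq_replicate_0_below:
  assumes "k + 2 \<le> u"
  shows "calE k c s (2^u) m = replicate m 0"
proof -
  have "(2::int)^(k+2) dvd 2^u" using assms by (rule le_imp_power_dvd)
  then show ?thesis
    unfolding calE_eq_replicate_0_iff by (auto intro: eps_eq_0_if_power_dvd)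
qed

lemma calE_eq_replicate_0_above:
  fixes L p c :: int
  assumes "u \<le> s + 1" "0 \<le> p" "p \<le> 2^(s+1-u) - 1" "s \<le> k"
    and gap: "residue_gap (2^(k-s+2)) ((2 + c) * 2^(k-s) - L)"
  shows "calE k c (2^s * L + 2^u * p) (2^u) (2^(s+1-u)) = replicate (2^(s+1-u)) 0"
  unfolding calE_eq_replicate_0_iff
proof (intro allI impI)
  fix j :: nat
  assume "j < 2^(s+1-u)"
  then have "int j < 2^(s+1-u)"
    by (metis of_nat_less_iff of_nat_numeral of_nat_power)
  then have "p + int j + 1 \<le> 2 * 2^(s+1-u) - 1"
    using assms(3) by linarith
  then have "2^u * (p + int j + 1) \<le> 2^u * (2 * 2^(s+1-u) - 1)"
    by (rule mult_left_mono) simp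
  also have "\<dots> = 2^s * 4 - 2^u"
  proof -
    have "(2::int)^u * 2^(s+1-u) = 2^(s+1)" using assms(1) by (simp flip: power_add)
    then show ?thesis by (simp add: algebra_simps)
  qed
  finally have "2^u * (p + int j + 1) < 2^s * 4"
    using zero_less_power[of "2::int" u] by linarith
  moreover have "0 \<le> 2^u * p + int j * 2^u" using assms(2) by simp
  ultimately show
    "eps k c (2^s * L + 2^u * p + int j * 2^u) (2^s * L + 2^u * p + int j * 2^u + 2^u) = 0"
    by (intro eps_eq_0_if_residue_gap[OF assms(4) gap]) (simp_all add: algebra_simps)
qed

theorem lemma5p2:
  fixes b :: "nat \<Rightarrow> int" and t u :: nat and p :: int
  assumes hb: "\<forall>i. b i \<in> {1, -1}"
    and ht: "t \<ge> 1" and hu: "u \<le> t"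
    and hp0: "0 \<le> p" and hp1: "p \<le> 2 ^ (t - u) - 1"
  shows "(\<forall>k. (k + 2 \<le> u \<or> k + 1 \<ge> t) \<longrightarrow>
            calE k (b k) (ellt b (t - 1) + 2 ^ u * p) (2 ^ u) (2 ^ (t - u))
              = replicate (2 ^ (t - u)) 0)
       \<and> (\<forall>k. \<forall>c \<in> {-1, 1::int}. (k + 2 \<le> u \<or> k \<ge> t + 3) \<longrightarrow>
            calE k c (ellt b (t - 1) + 2 ^ u * p) (2 ^ u) (2 ^ (t - u))
              = replicate (2 ^ (t - u)) 0)"
proof -
  obtain s where t: "t = s + 1" using ht by (metis add.commute le_Suc_ex)
  define L where "L = ell (b s) (b (s + 1)) (b (s + 2)) (b (s + 3))"
  have ellt: "ellt b (t - 1) = 2^s * L" by (simp add: t ellt_def L_def)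
  have tu: "t - u = s + 1 - u" by (simp add: t)
  have above: "calE k c (ellt b (t - 1) + 2^u * p) (2^u) (2^(t-u)) = replicate (2^(t-u)) 0"
    if "s \<le> k" "residue_gap (2^(k-s+2)) ((2 + c) * 2^(k-s) - L)" for k c
    using that hu hp0 hp1 unfolding ellt tu by (intro calE_eq_replicate_0_above) (auto simp: t)
  have high: "residue_gap (2^(k-s+2)) ((2 + c) * 2^(k-s) - L)" if "s + 4 \<le> k" "c \<in> {-1,1}" for k c
    using that hb unfolding L_def by (intro residue_gap_ell_high ell_range) auto
  have low: "residue_gap (2^(k-s+2)) ((2 + b k) * 2^(k-s) - L)" if "s \<le> k" "k < s + 4" for k
    using residue_gap_ell_table[of "\<lambda>i. b (s + i)" "k - s"] that hb
    by (simp add: L_def numeral_eq_Suc add.commute)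
  show ?thesis
  proof (intro conjI allI ballI impI)
    fix k assume "k + 2 \<le> u \<or> k + 1 \<ge> t"
    then consider "k + 2 \<le> u" | "s \<le> k" "k < s + 4" | "s + 4 \<le> k" unfolding t by linarith
    then show "calE k (b k) (ellt b (t - 1) + 2^u * p) (2^u) (2^(t-u)) = replicate (2^(t-u)) 0"
    proof cases
      case 1
      then show ?thesis by (rule calE_eq_replicate_0_below)
    next
      case 2
      then show ?thesis by (intro above low) simp_all
    next
      case 3
      then show ?thesis using hb by (intro above high) auto
    qed
  next
    fix k c assume c: "c \<in> {-1, 1::int}" and "k + 2 \<le> u \<or> k \<ge> t + 3"
    then consider "k + 2 \<le> u" | "s + 4 \<le> k" unfolding t by linarith
    then show "calE k c (ellt b (t - 1) + 2^u * p) (2^u) (2^(t-u)) = replicate (2^(t-u)) 0"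
    proof cases
      case 1
      then show ?thesis by (rule calE_eq_replicate_0_below)
    next
      case 2
      then show ?thesis using c by (intro above high) auto
    qed
  qed
qed

end
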